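(* Let $(N_1(t))_{t\ge 0}$ be a standard Poisson process with rate $1$, let $\lambda:[0,\infty)\to(0,\infty)$ be locally integrable, $\Lambda(t)=\int_0^t\lambda(\tau)\,d\tau$ with $\Lambda(t)\to\infty$ as $t\to\infty$. Let $\alpha\in(0,1)$, let $L_\alpha$ be an $\alpha$-stable subordinator ($\mathbb{E}[e^{-uL_\alpha(t)}]=e^{-tu^\alpha}$) and $Y_\alpha(t)=\inf\{u\ge0:L_\alpha(u)>t\}$, independent of $N_1$. Let $N(t)=N_1(\Lambda(t))$ and $N_\alpha(t)=N(Y_\alpha(t))$, adapted to the filtration $\mathcal{F}_t=\sigma(\{Y_\alpha(s),s\ge0\})\vee\sigma(\{N_\alpha(s):s\le t\})$, with $\mathcal{F}_0=\sigma(\{Y_\alpha(s),s\ge0\})$. Then $$\frac{N(Y_\alpha(T))-\Lambda(Y_\alpha(T))}{\sqrt{\Lambda(Y_\alpha(T))}}\longrightarrow W\sim N(0,1)\qquad \mathcal{F}_0\text{-stably as }T\to\infty.$$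
   Context: If $X_n, X$ are real random variables on $(\Omega,\mathcal{E},\mathbb{P})$ and $\mathcal{F}\subseteq\mathcal{E}$ is a sub-$\sigma$-algebra, $X_n\to X$ $\mathcal{F}$-stably (in distribution) means: for all $B\in\mathcal{F}$ and all Borel $A\subseteq\mathbb{R}$ with $\mathbb{P}(X\in\partial A)=0$, $\mathbb{P}(\{X_n\in A\}\cap B)\to\mathbb{P}(\{X\in A\}\cap B)$. (The same definition applies along a continuous parameter $T\to\infty$.) *)

theory Defs
  imports "HOL-Probability.Probability"
begin

definition std_normal_measure :: "real measure" where
  "std_normal_measure = density lborel std_normal_density"

definition indep_increments :: "'a measure \<Rightarrow> (real \<Rightarrow> 'a \<Rightarrow> real) \<Rightarrow> bool" where
  "indep_increments M X \<longleftrightarrow>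
     (\<forall>ts::real list. sorted ts \<and> ts \<noteq> [] \<and> 0 \<le> hd ts \<longrightarrow>
        prob_space.indep_vars M (\<lambda>_. borel) (\<lambda>i \<omega>. X (ts ! Suc i) \<omega> - X (ts ! i) \<omega>)
          {..<length ts - 1})"

definition std_poisson_process :: "'a measure \<Rightarrow> (real \<Rightarrow> 'a \<Rightarrow> nat) \<Rightarrow> bool" where
  "std_poisson_process M N \<longleftrightarrow>
     (\<forall>t. N t \<in> measurable M (count_space UNIV)) \<and>
     (\<forall>\<omega>\<in>space M. N 0 \<omega> = 0 \<and> mono_on {0..} (\<lambda>t. N t \<omega>) \<and>
        (\<forall>t\<ge>0. continuous (at_right t) (\<lambda>s. real (N s \<omega>)))) \<and>
     indep_increments M (\<lambda>t \<omega>. real (N t \<omega>)) \<and>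
     (\<forall>s t. 0 \<le> s \<and> s < t \<longrightarrow>
        distr M (count_space UNIV) (\<lambda>\<omega>. N t \<omega> - N s \<omega>) = measure_pmf (poisson_pmf (t - s)))"

definition stable_subordinator :: "'a measure \<Rightarrow> real \<Rightarrow> (real \<Rightarrow> 'a \<Rightarrow> real) \<Rightarrow> bool" where
  "stable_subordinator M \<alpha> L \<longleftrightarrow>
     (\<forall>t. L t \<in> borel_measurable M) \<and>
     (\<forall>\<omega>\<in>space M. L 0 \<omega> = 0 \<and> mono_on {0..} (\<lambda>t. L t \<omega>) \<and>
        (\<forall>t\<ge>0. continuous (at_right t) (\<lambda>s. L s \<omega>))) \<and>
     indep_increments M L \<and>
     (\<forall>s t u. 0 \<le> s \<and> s \<le> t \<and> 0 \<le> u \<longrightarrow>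
        prob_space.expectation M (\<lambda>\<omega>. exp (- u * (L t \<omega> - L s \<omega>))) = exp (- (t - s) * u powr \<alpha>))"

definition inverse_subordinator :: "(real \<Rightarrow> 'a \<Rightarrow> real) \<Rightarrow> real \<Rightarrow> 'a \<Rightarrow> real" where
  "inverse_subordinator L t \<omega> = Inf {u. 0 \<le> u \<and> L u \<omega> > t}"

definition gen_sigma :: "'a measure \<Rightarrow> (real \<Rightarrow> 'a \<Rightarrow> real) \<Rightarrow> 'a set set" where
  "gen_sigma M Y = sigma_sets (space M)
     (\<Union>s\<in>{0..}. {Y s -` A \<inter> space M | A. A \<in> sets borel})"

end

theory Submission
  imports Defs
begin

(* Conditionally on the subordinator the random time \<Lambda>(Y(T)) is frozen while N1 remains a
   Poisson process: for a random time Z \<ge> 0 measurable w.r.t. the paths of L and B in that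
   sigma-algebra, P({N1(Z) = j} \<inter> B) = E[1_B e^(-Z) Z^j / j!]. This holds for dyadic-valued Z
   by independence and passes to general Z by right-continuity of the Poisson paths.
   Hence the probability in question is E[1_B h_A(\<Lambda>(Y(T)))], where h_A(m) is the probability
   that a normalized Poisson(m) variable lies in A. The Poisson CLT (characteristic functions
   and Levy's continuity theorem) gives h_A(m) \<rightarrow> N(0,1)(A) for continuity sets A, and since
   E[exp(-L(t))] = exp(-t) forces L(t) \<rightarrow> \<infinity> a.s., also Y(T) \<rightarrow> \<infinity> and \<Lambda>(Y(T)) \<rightarrow> \<infinity> a.s.;
   dominated convergence concludes. The stability index \<alpha> plays no role. *)

section \<open>The Poisson central limit theorem\<close>

definition poisson_weight :: "real \<Rightarrow> nat \<Rightarrow> real" where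
  "poisson_weight m j = m ^ j / fact j * exp (- m)"

lemma poisson_weight_nonneg: "0 \<le> m \<Longrightarrow> 0 \<le> poisson_weight m j"
  by (simp add: poisson_weight_def)

lemma poisson_weight_sums: "(\<lambda>j. poisson_weight m j) sums 1"
proof -
  have "(\<lambda>j. exp (- m) * (m ^ j /\<^sub>R fact j)) sums (exp (- m) * exp m)"
    by (intro sums_mult exp_converges)
  then show ?thesis by (simp add: poisson_weight_def exp_minus field_simps)
qed

lemma poisson_weight_le_1:
  assumes "0 \<le> m"
  shows "poisson_weight m j \<le> 1"
proof -
  have "poisson_weight m j = (\<Sum>i\<in>{j}. poisson_weight m i)" by simp
  also have "\<dots> \<le> (\<Sum>i. poisson_weight m i)"
    using poisson_weight_nonneg[OF assms] by (intro sum_le_suminf sums_summable[OF poisson_weight_sums]) auto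
  also have "\<dots> = 1" using poisson_weight_sums by (rule sums_unique[symmetric])
  finally show ?thesis .
qed

lemma isCont_poisson_weight: "isCont (\<lambda>m. poisson_weight m j) m"
  unfolding poisson_weight_def by (intro continuous_intros) (simp add: less_le_trans[OF zero_less_one])

lemma borel_measurable_poisson_weight[measurable]: "(\<lambda>m. poisson_weight m j) \<in> borel_measurable borel"
  unfolding poisson_weight_def by measurable

definition normalized_poisson :: "real \<Rightarrow> real measure" where
  "normalized_poisson m = distr (measure_pmf (poisson_pmf m)) borel (\<lambda>k. (real k - m) / sqrt m)"

lemma real_distribution_normalized_poisson: "real_distribution (normalized_poisson m)"
  unfolding normalized_poisson_def
  by (rule prob_space.real_distribution_distr) (auto simp: measure_pmf.prob_space_axioms)

lemma char_normalized_poisson: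
  fixes m t :: real assumes m: "m > 0"
  shows "char (normalized_poisson m) t
        = exp (complex_of_real m * (iexp (t / sqrt m) - 1) - \<i> * complex_of_real (t * sqrt m))"
proof -
  define s where "s = t / sqrt m"
  define c where "c = exp (- complex_of_real m) * iexp (- t * sqrt m)"
  define a where "a = complex_of_real m * iexp s"
  have summand: "pmf (poisson_pmf m) k *\<^sub>R iexp (t * ((real k - m) / sqrt m)) = c * (a ^ k /\<^sub>R fact k)" for k
  proof -
    have "t * ((real k - m) / sqrt m) = real k * s + (- t * sqrt m)"
      using m by (simp add: s_def field_simps real_sqrt_mult[symmetric])
    moreover have "iexp s ^ k * iexp (- t * sqrt m) = iexp (real k * s + (- t * sqrt m))"
      by (simp add: exp_of_nat_mult[symmetric] exp_add[symmetric] algebra_simps)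
    ultimately have "iexp (t * ((real k - m) / sqrt m)) = iexp s ^ k * iexp (- t * sqrt m)"
      by simp
    then show ?thesis using m
      by (simp add: a_def c_def scaleR_conv_of_real power_mult_distrib exp_of_real[symmetric] field_simps)
  qed
  have exp_series: "(\<lambda>k. c * (a ^ k /\<^sub>R fact k)) sums (c * exp a)"
    by (intro sums_mult exp_converges)
  have "integrable (count_space UNIV) (\<lambda>k::nat. c * (a ^ k /\<^sub>R fact k))"
    unfolding integrable_count_space_nat_iff
  proof -
    have "summable (\<lambda>k. norm c * (norm a ^ k /\<^sub>R fact k))"
      by (intro summable_mult exp_converges[THEN sums_summable])
    moreover have "norm (c * (a ^ k /\<^sub>R fact k)) = norm c * (norm a ^ k /\<^sub>R fact k)" for k
      by (simp add: norm_mult norm_power)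
    ultimately show "summable (\<lambda>k. norm (c * (a ^ k /\<^sub>R fact k)))"
      by (simp only:)
  qed
  then have "(\<integral>k. c * (a ^ k /\<^sub>R fact k) \<partial>count_space UNIV) = c * exp a"
    using exp_series by (simp add: integral_count_space_nat sums_iff)
  moreover have "char (normalized_poisson m) t
      = (\<integral>k. pmf (poisson_pmf m) k *\<^sub>R iexp (t * ((real k - m) / sqrt m)) \<partial>count_space UNIV)"
    unfolding char_def normalized_poisson_def
    by (subst integral_distr) (simp_all add: measure_pmf_eq_density integral_density)
  ultimately have "char (normalized_poisson m) t = c * exp a"
    by (simp only: summand)
  also have "\<dots> = exp (complex_of_real m * (iexp s - 1) - \<i> * complex_of_real (t * sqrt m))"
    by (simp add: a_def c_def exp_add[symmetric] exp_diff algebra_simps)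
  finally show ?thesis by (simp add: s_def)
qed

lemma normalized_poisson_char_exponent_bound:
  fixes m t :: real assumes m: "m > 0"
  shows "norm (complex_of_real m * (iexp (t / sqrt m) - 1) - \<i> * complex_of_real (t * sqrt m)
           - complex_of_real (- (t^2) / 2)) \<le> \<bar>t\<bar>^3 / 6 / sqrt m"
    (is "norm (?E - _) \<le> _")
proof -
  define s where "s = t / sqrt m"
  have sq: "sqrt m * sqrt m = m" "sqrt m > 0" using m by simp_all
  have ms: "m * s = t * sqrt m" "m * s^2 = t^2"
  proof -
    show "m * s = t * sqrt m" unfolding s_def using sq
      by (metis nonzero_mult_div_cancel_left order_less_irrefl times_divide_eq_right mult.commute)
    show "m * s^2 = t^2" unfolding s_def using sq m
      by (simp add: power2_eq_square)
  qed
  have remainder: "m * (\<bar>s\<bar>^3 / 6) = \<bar>t\<bar>^3 / 6 / sqrt m"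
  proof -
    have "\<bar>s\<bar>^3 = \<bar>t\<bar>^3 / (sqrt m * sqrt m * sqrt m)"
      unfolding s_def using sq by (simp add: abs_div power_divide eval_nat_numeral)
    then show ?thesis using sq by simp
  qed
  have taylor2: "(\<Sum>k\<le>2. (\<i> * complex_of_real s)^k / fact k) = 1 + \<i> * complex_of_real s - complex_of_real (s^2) / 2"
    by (simp add: eval_nat_numeral power2_eq_square algebra_simps)
  \<comment> \<open>the exponent minus its limit is m times the second-order Taylor remainder of iexp at s\<close>
  have "complex_of_real m * (iexp s - (\<Sum>k\<le>2. (\<i> * s)^k / fact k))
      = complex_of_real m * iexp s - complex_of_real m - \<i> * complex_of_real (m * s) + complex_of_real (m * s^2) / 2"
    unfolding taylor2 by (simp add: algebra_simps)
  also have "\<dots> = ?E - complex_of_real (- (t^2) / 2)"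
    unfolding ms by (simp add: algebra_simps flip: s_def)
  finally have "?E - complex_of_real (- (t^2) / 2) = complex_of_real m * (iexp s - (\<Sum>k\<le>2. (\<i> * s)^k / fact k))"
    by simp
  then have "norm (?E - complex_of_real (- (t^2) / 2)) = m * norm (iexp s - (\<Sum>k\<le>2. (\<i> * s)^k / fact k))"
    using m by (simp add: norm_mult)
  also have "\<dots> \<le> m * (\<bar>s\<bar>^3 / 6)"
    using iexp_approx1[of s 2] m by (intro mult_left_mono) (auto simp: eval_nat_numeral)
  finally show ?thesis by (simp only: remainder)
qed

lemma normalized_poisson_char_exponent_tendsto:
  fixes t :: real
  shows "((\<lambda>m::real. complex_of_real m * (iexp (t / sqrt m) - 1) - \<i> * complex_of_real (t * sqrt m))
          \<longlongrightarrow> complex_of_real (- (t^2) / 2)) at_top"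
proof -
  let ?E = "\<lambda>m::real. complex_of_real m * (iexp (t / sqrt m) - 1) - \<i> * complex_of_real (t * sqrt m)"
  have "\<forall>\<^sub>F m in at_top. norm (?E m - complex_of_real (- (t^2) / 2)) \<le> \<bar>t\<bar>^3 / 6 / sqrt m"
    using eventually_gt_at_top[of 0] by eventually_elim (rule normalized_poisson_char_exponent_bound)
  moreover have "((\<lambda>m::real. \<bar>t\<bar>^3 / 6 / sqrt m) \<longlongrightarrow> 0) at_top"
    by (rule tendsto_divide_0[OF tendsto_const filterlim_mono[OF sqrt_at_top at_top_le_at_infinity order_refl]])
  ultimately have "((\<lambda>m. ?E m - complex_of_real (- (t^2) / 2)) \<longlongrightarrow> 0) at_top"
    by (rule Lim_null_comparison)
  then show ?thesis by (rule LIM_zero_cancel)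
qed

lemma weak_conv_normalized_poisson:
  assumes X: "filterlim X at_top sequentially"
  shows "weak_conv_m (\<lambda>n. normalized_poisson (X n)) std_normal_measure"
proof (rule levy_continuity[OF real_distribution_normalized_poisson])
  show "real_distribution std_normal_measure"
    unfolding std_normal_measure_def by (rule real_dist_normal_dist)
  fix t :: real
  have lim: "(\<lambda>n. exp (complex_of_real (X n) * (iexp (t / sqrt (X n)) - 1) - \<i> * complex_of_real (t * sqrt (X n))))
      \<longlonglongrightarrow> exp (complex_of_real (- (t^2) / 2))"
    by (intro tendsto_exp filterlim_compose[OF normalized_poisson_char_exponent_tendsto X])
  have ev: "\<forall>\<^sub>F n in sequentially. exp (complex_of_real (X n) * (iexp (t / sqrt (X n)) - 1)
      - \<i> * complex_of_real (t * sqrt (X n))) = char (normalized_poisson (X n)) t"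
    using filterlim_at_top_dense[THEN iffD1, OF X, rule_format, of 0]
    by eventually_elim (simp add: char_normalized_poisson)
  have "char std_normal_measure t = exp (complex_of_real (- (t^2) / 2))"
    unfolding std_normal_measure_def char_std_normal_distribution by (simp only: exp_of_real)
  then show "(\<lambda>n. char (normalized_poisson (X n)) t) \<longlonglongrightarrow> char std_normal_measure t"
    using Lim_transform_eventually[OF lim ev] by simp
qed

lemma normalized_poisson_continuity_set_tendsto:
  assumes A: "A \<in> sets borel" and fr: "measure std_normal_measure (frontier A) = 0"
  shows "((\<lambda>m. measure (normalized_poisson m) A) \<longlongrightarrow> measure std_normal_measure A) at_top"
proof (rule tendsto_at_topI_sequentially)
  fix X :: "nat \<Rightarrow> real" assume X: "filterlim X at_top sequentially"
  have N: "real_distribution std_normal_measure"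
    unfolding std_normal_measure_def by (rule real_dist_normal_dist)
  then have "emeasure std_normal_measure (frontier A) = 0"
    using fr by (metis real_distribution_def prob_space_def finite_measure.emeasure_eq_measure ennreal_0)
  from weak_conv_imp_continuity_set_conv[OF real_distribution_normalized_poisson N
      weak_conv_normalized_poisson[OF X] A this]
  show "(\<lambda>n. measure (normalized_poisson (X n)) A) \<longlonglongrightarrow> measure std_normal_measure A" .
qed

text \<open>Equals the normalized Poisson probability of A for m > 0, but is also defined at m = 0.\<close>
definition normalized_poisson_prob :: "real set \<Rightarrow> real \<Rightarrow> ennreal" where
  "normalized_poisson_prob A m = (\<Sum>j. ennreal (poisson_weight m j * indicator A ((real j - m) / sqrt m)))"

lemma normalized_poisson_prob_le_1:
  assumes m: "0 \<le> m"
  shows "normalized_poisson_prob A m \<le> 1"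
proof -
  have "normalized_poisson_prob A m \<le> (\<Sum>j. ennreal (poisson_weight m j))"
    unfolding normalized_poisson_prob_def
    by (intro suminf_le) (auto simp: indicator_def poisson_weight_nonneg[OF m])
  also have "\<dots> = ennreal (\<Sum>j. poisson_weight m j)"
    using poisson_weight_sums poisson_weight_nonneg[OF m] by (intro suminf_ennreal2) (auto simp: sums_iff)
  also have "\<dots> = 1" using poisson_weight_sums by (simp add: sums_iff)
  finally show ?thesis .
qed

lemma normalized_poisson_prob_eq_emeasure:
  assumes A: "A \<in> sets borel" and m: "0 < m"
  shows "normalized_poisson_prob A m = emeasure (normalized_poisson m) A"
proof -
  have "emeasure (normalized_poisson m) A
      = emeasure (measure_pmf (poisson_pmf m)) ((\<lambda>k. (real k - m) / sqrt m) -` A)"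
    using A unfolding normalized_poisson_def by (subst emeasure_distr) auto
  also have "\<dots> = (\<integral>\<^sup>+k. ennreal (pmf (poisson_pmf m) k) * indicator ((\<lambda>k. (real k - m) / sqrt m) -` A) k \<partial>count_space UNIV)"
    by (simp add: nn_integral_measure_pmf flip: nn_integral_indicator)
  also have "\<dots> = normalized_poisson_prob A m"
    unfolding nn_integral_count_space_nat normalized_poisson_prob_def using m
    by (intro suminf_cong) (auto simp: poisson_weight_def indicator_def)
  finally show ?thesis by simp
qed

lemma normalized_poisson_prob_tendsto:
  assumes A: "A \<in> sets borel" and fr: "measure std_normal_measure (frontier A) = 0"
  shows "((\<lambda>m. enn2real (normalized_poisson_prob A m)) \<longlongrightarrow> measure std_normal_measure A) at_top"
proof -
  have "\<forall>\<^sub>F m in at_top. measure (normalized_poisson m) A = enn2real (normalized_poisson_prob A m)"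
    using eventually_gt_at_top[of 0]
    by eventually_elim (simp add: normalized_poisson_prob_eq_emeasure[OF A] measure_def)
  from Lim_transform_eventually[OF normalized_poisson_continuity_set_tendsto[OF A fr] this]
  show ?thesis .
qed

lemma borel_measurable_normalized_poisson_prob[measurable]:
  assumes [measurable]: "A \<in> sets borel"
  shows "normalized_poisson_prob A \<in> borel_measurable borel"
proof -
  have "(\<lambda>x. indicator A ((real j - x) / sqrt x) :: real) \<in> borel_measurable borel" for j
  proof -
    have "(\<lambda>x. (real j - x) / sqrt x) -` A \<in> sets borel"
      using measurable_sets[of "\<lambda>x. (real j - x) / sqrt x" borel borel A] by simp
    then show ?thesis
      using borel_measurable_indicator[of "(\<lambda>x. (real j - x) / sqrt x) -` A" borel]
      by (simp add: indicator_def)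
  qed
  then show ?thesis unfolding normalized_poisson_prob_def by measurable
qed

section \<open>Poisson processes at independent random times\<close>

definition dyadic_ceiling :: "nat \<Rightarrow> real \<Rightarrow> real" where
  "dyadic_ceiling n z = real (nat \<lceil>2^n * z\<rceil>) / 2^n"

lemma dyadic_ceiling_bounds:
  assumes "0 \<le> z"
  shows "z \<le> dyadic_ceiling n z" "dyadic_ceiling n z \<le> z + inverse (2^n)"
proof -
  have "real (nat \<lceil>2^n * z\<rceil>) = real_of_int \<lceil>2^n * z\<rceil>" using assms by simp
  moreover have "2^n * z \<le> real_of_int \<lceil>2^n * z\<rceil>" "real_of_int \<lceil>2^n * z\<rceil> \<le> 2^n * z + 1"
    by (rule le_of_int_ceiling, rule of_int_ceiling_le_add_one)
  ultimately show "z \<le> dyadic_ceiling n z" "dyadic_ceiling n z \<le> z + inverse (2^n)"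
    unfolding dyadic_ceiling_def by (simp_all add: field_simps)
qed

lemma dyadic_ceiling_tendsto:
  assumes "0 \<le> z"
  shows "(\<lambda>n. dyadic_ceiling n z) \<longlonglongrightarrow> z"
proof (rule tendsto_sandwich[of "\<lambda>_. z" _ _ "\<lambda>n. z + inverse (2^n)"])
  have "(\<lambda>n. z + inverse ((2::real)^n)) \<longlonglongrightarrow> z + 0"
    by (intro tendsto_add tendsto_const LIMSEQ_inverse_realpow_zero) simp
  then show "(\<lambda>n. z + inverse ((2::real)^n)) \<longlonglongrightarrow> z" by simp
qed (use dyadic_ceiling_bounds[OF assms] in simp_all)

lemma tendsto_dyadic_ceiling_at_right:
  fixes f :: "real \<Rightarrow> 'b::topological_space"
  assumes "continuous (at_right z) f" and "0 \<le> z"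
  shows "(\<lambda>n. f (dyadic_ceiling n z)) \<longlonglongrightarrow> f z"
proof -
  have "{z..} - {z} = {z<..}" by auto
  then have "at z within {z..} = at_right z" by (simp add: at_within_def)
  with assms(1) have "continuous (at z within {z..}) f" by simp
  then show ?thesis
    using dyadic_ceiling_bounds[OF assms(2)] dyadic_ceiling_tendsto[OF assms(2)]
    unfolding continuous_within_sequentially by (simp add: o_def)
qed

lemma eventually_eq_of_tendsto_of_nat:
  assumes "(\<lambda>n. real (a n)) \<longlonglongrightarrow> real (b::nat)"
  shows "\<forall>\<^sub>F n in sequentially. a n = b"
proof -
  have "\<forall>\<^sub>F n in sequentially. real b - 1/2 < real (a n) \<and> real (a n) < real b + 1/2"
    using order_tendstoD[OF assms, of "real b - 1/2"] order_tendstoD[OF assms, of "real b + 1/2"]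
    by (auto intro: eventually_conj)
  then show ?thesis by eventually_elim linarith
qed

lemma (in prob_space) measure_eq_integral_if_emeasure_eq:
  assumes "emeasure M S = (\<integral>\<^sup>+\<omega>. ennreal (f \<omega>) \<partial>M)" and [measurable]: "f \<in> borel_measurable M"
    and bounds: "\<And>\<omega>. \<omega> \<in> space M \<Longrightarrow> 0 \<le> f \<omega> \<and> f \<omega> \<le> 1"
  shows "measure M S = integral\<^sup>L M f"
proof -
  have "integrable M f"
    by (rule integrable_const_bound[where B=1]) (use bounds in auto)
  then have "emeasure M S = ennreal (integral\<^sup>L M f)"
    using assms(1) bounds by (simp add: nn_integral_eq_integral)
  then show ?thesis
    using bounds by (simp add: measure_def integral_nonneg_AE)
qed

locale poisson_with_indep_process = prob_space M for M :: "'a measure" +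
  fixes N1 :: "real \<Rightarrow> 'a \<Rightarrow> nat" and L :: "real \<Rightarrow> 'a \<Rightarrow> real"
  assumes poisson: "std_poisson_process M N1"
    and indep_paths: "indep_var (PiM UNIV (\<lambda>_::real. borel)) (\<lambda>\<omega> t. real (N1 t \<omega>))
                                (PiM UNIV (\<lambda>_::real. borel)) (\<lambda>\<omega> t. L t \<omega>)"
begin

abbreviation paths :: "(real \<Rightarrow> real) measure" where
  "paths \<equiv> PiM UNIV (\<lambda>_::real. borel)"

definition L_algebra :: "'a measure" where
  "L_algebra = vimage_algebra (space M) (\<lambda>\<omega> t. L t \<omega>) paths"

lemma L_paths_measurable: "(\<lambda>\<omega> t. L t \<omega>) \<in> measurable M paths"
  using indep_var_rv2[OF indep_paths] .

lemma space_L_algebra[simp]: "space L_algebra = space M"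
  by (simp add: L_algebra_def)

lemma sets_L_algebra: "sets L_algebra = {(\<lambda>\<omega> t. L t \<omega>) -` S \<inter> space M | S. S \<in> sets paths}"
  unfolding L_algebra_def using measurable_space[OF L_paths_measurable]
  by (intro sets_vimage_algebra2) auto

lemma subalgebra_L_algebra: "subalgebra M L_algebra"
  unfolding subalgebra_def sets_L_algebra using measurable_sets[OF L_paths_measurable] by auto

lemma sets_L_algebra_into_sets: "A \<in> sets L_algebra \<Longrightarrow> A \<in> sets M"
  using subalgebra_L_algebra by (auto simp: subalgebra_def)

lemma measurable_L_algebra_into_borel: "f \<in> borel_measurable L_algebra \<Longrightarrow> f \<in> borel_measurable M"
  by (rule measurable_from_subalg[OF subalgebra_L_algebra])

lemma L_measurable_L_algebra[measurable]: "L t \<in> borel_measurable L_algebra"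
proof -
  have "(\<lambda>\<omega> t. L t \<omega>) \<in> measurable L_algebra paths"
    unfolding L_algebra_def using measurable_space[OF L_paths_measurable]
    by (intro measurable_vimage_algebra1) auto
  from measurable_compose[OF this measurable_component_singleton[of t UNIV "\<lambda>_. borel"]]
  show ?thesis by simp
qed

lemma N1_measurable[measurable]: "N1 t \<in> measurable M (count_space UNIV)"
  using poisson unfolding std_poisson_process_def by blast

lemma N1_zero: "\<omega> \<in> space M \<Longrightarrow> N1 0 \<omega> = 0"
  using poisson unfolding std_poisson_process_def by blast

lemma N1_right_continuous: "\<omega> \<in> space M \<Longrightarrow> 0 \<le> t \<Longrightarrow> continuous (at_right t) (\<lambda>s. real (N1 s \<omega>))"
  using poisson unfolding std_poisson_process_def by blast

lemma distr_N1: "0 < t \<Longrightarrow> distr M (count_space UNIV) (N1 t) = measure_pmf (poisson_pmf t)"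
proof -
  assume t: "0 < t"
  have "distr M (count_space UNIV) (N1 t) = distr M (count_space UNIV) (\<lambda>\<omega>. N1 t \<omega> - N1 0 \<omega>)"
    by (rule distr_cong) (auto simp: N1_zero)
  also have "\<dots> = measure_pmf (poisson_pmf t)"
    using poisson t unfolding std_poisson_process_def by auto
  finally show ?thesis .
qed

lemma prob_N1_eq:
  assumes "0 \<le> t"
  shows "measure M {\<omega>\<in>space M. N1 t \<omega> = j} = poisson_weight t j"
proof (cases "t = 0")
  case True
  then have "{\<omega>\<in>space M. N1 t \<omega> = j} = (if j = 0 then space M else {})"
    using N1_zero by auto
  then show ?thesis using True by (simp add: poisson_weight_def prob_space)
next
  case False
  with assms have "0 < t" by simp
  have "measure M {\<omega>\<in>space M. N1 t \<omega> = j} = measure (distr M (count_space UNIV) (N1 t)) {j}"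
    by (subst measure_distr) (auto intro!: arg_cong[where f="measure M"])
  also have "\<dots> = poisson_weight t j"
    using \<open>0 < t\<close> by (simp add: distr_N1 measure_pmf_single poisson_weight_def)
  finally show ?thesis .
qed

lemma prob_N1_eq_inter:
  assumes D: "D \<in> sets L_algebra" and t: "0 \<le> t"
  shows "measure M ({\<omega>\<in>space M. N1 t \<omega> = j} \<inter> D) = poisson_weight t j * measure M D"
proof -
  obtain S where S: "S \<in> sets paths" "D = (\<lambda>\<omega> t. L t \<omega>) -` S \<inter> space M"
    using D unfolding sets_L_algebra by auto
  define X where "X = (\<lambda>f. f t) -` {real j} \<inter> space paths"
  have X: "X \<in> sets paths"
    unfolding X_def by (rule measurable_sets[OF measurable_component_singleton]) auto
  have N1_set: "(\<lambda>\<omega> t. real (N1 t \<omega>)) -` X \<inter> space M = {\<omega>\<in>space M. N1 t \<omega> = j}"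
    by (auto simp: X_def space_PiM)
  have "measure M ({\<omega>\<in>space M. N1 t \<omega> = j} \<inter> D)
      = measure M ((\<lambda>\<omega>. ((\<lambda>t. real (N1 t \<omega>)), (\<lambda>t. L t \<omega>))) -` (X \<times> S) \<inter> space M)"
    using N1_set S(2) by (intro arg_cong[where f="measure M"]) auto
  also have "\<dots> = measure M {\<omega>\<in>space M. N1 t \<omega> = j} * measure M D"
    using indep_varD[OF indep_paths X S(1)] by (simp only: N1_set S(2))
  finally show ?thesis by (simp add: prob_N1_eq[OF t])
qed

lemma N1_at_random_time_measurable:
  assumes Z: "Z \<in> borel_measurable M" and Z_nonneg: "\<And>\<omega>. \<omega> \<in> space M \<Longrightarrow> 0 \<le> Z \<omega>"
  shows "(\<lambda>\<omega>. real (N1 (Z \<omega>) \<omega>)) \<in> borel_measurable M"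
proof (rule borel_measurable_LIMSEQ_real)
  fix \<omega> assume "\<omega> \<in> space M"
  then show "(\<lambda>n. real (N1 (dyadic_ceiling n (Z \<omega>)) \<omega>)) \<longlonglongrightarrow> real (N1 (Z \<omega>) \<omega>)"
    using Z_nonneg by (intro tendsto_dyadic_ceiling_at_right N1_right_continuous)
next
  fix n :: nat
  have "(\<lambda>\<omega>. nat \<lceil>2^n * Z \<omega>\<rceil>) \<in> measurable M (count_space UNIV)"
    using Z by measurable
  then show "(\<lambda>\<omega>. real (N1 (dyadic_ceiling n (Z \<omega>)) \<omega>)) \<in> borel_measurable M"
    unfolding dyadic_ceiling_def by (rule measurable_compose_countable'[rotated]) auto
qed

lemma sets_N1_at_random_time:
  assumes "Z \<in> borel_measurable M" and "\<And>\<omega>. \<omega> \<in> space M \<Longrightarrow> 0 \<le> Z \<omega>"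
  shows "{\<omega>\<in>space M. N1 (Z \<omega>) \<omega> = j} \<in> sets M"
proof -
  have [measurable]: "(\<lambda>\<omega>. real (N1 (Z \<omega>) \<omega>)) \<in> borel_measurable M"
    using assms by (rule N1_at_random_time_measurable)
  have "{\<omega>\<in>space M. real (N1 (Z \<omega>) \<omega>) = real j} \<in> sets M" by measurable
  then show ?thesis by simp
qed

lemma emeasure_N1_at_grid_time_inter:
  fixes t :: "nat \<Rightarrow> real" and K :: "'a \<Rightarrow> nat"
  assumes K: "K \<in> measurable L_algebra (count_space UNIV)" and t: "\<And>k. 0 \<le> t k"
    and C: "C \<in> sets L_algebra"
  shows "emeasure M ({\<omega>\<in>space M. N1 (t (K \<omega>)) \<omega> = j} \<inter> C)
       = (\<integral>\<^sup>+\<omega>. ennreal (indicator C \<omega> * poisson_weight (t (K \<omega>)) j) \<partial>M)"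
proof -
  define E where "E k = {\<omega>\<in>space M. N1 (t k) \<omega> = j}" for k
  define D where "D k = {\<omega>\<in>space M. K \<omega> = k} \<inter> C" for k
  have D_L: "D k \<in> sets L_algebra" for k
  proof -
    have "{\<omega>\<in>space L_algebra. K \<omega> = k} \<in> sets L_algebra" using K by measurable
    then show ?thesis unfolding D_def using C by auto
  qed
  have D_M[measurable]: "D k \<in> sets M" for k using D_L sets_L_algebra_into_sets by auto
  have E_M: "E k \<in> sets M" for k unfolding E_def by measurable
  have "{\<omega>\<in>space M. N1 (t (K \<omega>)) \<omega> = j} \<inter> C = (\<Union>k. E k \<inter> D k)"
    unfolding E_def D_def by auto
  also have "emeasure M \<dots> = (\<Sum>k. emeasure M (E k \<inter> D k))"
    using E_M D_M by (intro suminf_emeasure[symmetric]) (auto simp: disjoint_family_on_def D_def)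
  also have "\<dots> = (\<Sum>k. \<integral>\<^sup>+\<omega>. ennreal (poisson_weight (t k) j) * indicator (D k) \<omega> \<partial>M)"
    using prob_N1_eq_inter[OF D_L t] E_M D_M poisson_weight_nonneg[OF t]
    by (simp add: E_def emeasure_eq_measure ennreal_mult nn_integral_cmult_indicator)
  also have "\<dots> = (\<integral>\<^sup>+\<omega>. (\<Sum>k. ennreal (poisson_weight (t k) j) * indicator (D k) \<omega>) \<partial>M)"
    by (rule nn_integral_suminf[symmetric]) measurable
  also have "\<dots> = (\<integral>\<^sup>+\<omega>. ennreal (indicator C \<omega> * poisson_weight (t (K \<omega>)) j) \<partial>M)"
  proof (rule nn_integral_cong)
    fix \<omega> assume \<omega>: "\<omega> \<in> space M"
    have "(\<lambda>k. ennreal (poisson_weight (t k) j) * indicator (D k) \<omega>)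
        = (\<lambda>k. if k = K \<omega> then ennreal (indicator C \<omega> * poisson_weight (t (K \<omega>)) j) else 0)"
      using \<omega> poisson_weight_nonneg[OF t] by (auto simp: D_def indicator_def fun_eq_iff)
    then show "(\<Sum>k. ennreal (poisson_weight (t k) j) * indicator (D k) \<omega>)
        = ennreal (indicator C \<omega> * poisson_weight (t (K \<omega>)) j)"
      by (simp add: sums_unique[OF sums_single, symmetric])
  qed
  finally show ?thesis .
qed

lemma measure_N1_at_dyadic_time_tendsto:
  assumes Z[measurable]: "Z \<in> borel_measurable M" and Z_nonneg: "\<And>\<omega>. \<omega> \<in> space M \<Longrightarrow> 0 \<le> Z \<omega>"
    and C[measurable]: "C \<in> sets M"
  shows "(\<lambda>n. measure M ({\<omega>\<in>space M. N1 (dyadic_ceiling n (Z \<omega>)) \<omega> = j} \<inter> C))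
           \<longlonglongrightarrow> measure M ({\<omega>\<in>space M. N1 (Z \<omega>) \<omega> = j} \<inter> C)"
proof -
  define S where "S n = {\<omega>\<in>space M. N1 (dyadic_ceiling n (Z \<omega>)) \<omega> = j} \<inter> C" for n
  define S_lim where "S_lim = {\<omega>\<in>space M. N1 (Z \<omega>) \<omega> = j} \<inter> C"
  have dyadic_nonneg: "\<omega> \<in> space M \<Longrightarrow> 0 \<le> dyadic_ceiling n (Z \<omega>)" for n \<omega>
    by (simp add: dyadic_ceiling_def)
  have [measurable]: "S n \<in> sets M" for n
    unfolding S_def dyadic_ceiling_def using dyadic_nonneg
    by (intro sets.Int sets_N1_at_random_time) (auto simp: dyadic_ceiling_def)
  have [measurable]: "S_lim \<in> sets M"
    unfolding S_lim_def using Z_nonneg by (intro sets.Int sets_N1_at_random_time) auto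
  have "(\<lambda>n. integral\<^sup>L M (indicator (S n) :: 'a \<Rightarrow> real)) \<longlonglongrightarrow> integral\<^sup>L M (indicator S_lim)"
  proof (rule integral_dominated_convergence[where w="\<lambda>_. 1"])
    show "AE \<omega> in M. (\<lambda>n. indicator (S n) \<omega> :: real) \<longlonglongrightarrow> indicator S_lim \<omega>"
    proof (rule AE_I2)
      fix \<omega> assume \<omega>: "\<omega> \<in> space M"
      \<comment> \<open>right-continuous integer-valued paths are eventually constant along the dyadic approximations\<close>
      have "\<forall>\<^sub>F n in sequentially. N1 (dyadic_ceiling n (Z \<omega>)) \<omega> = N1 (Z \<omega>) \<omega>"
        using \<omega> Z_nonneg[OF \<omega>]
        by (intro eventually_eq_of_tendsto_of_nat tendsto_dyadic_ceiling_at_right N1_right_continuous)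
      then have "\<forall>\<^sub>F n in sequentially. (indicator (S n) \<omega> :: real) = indicator S_lim \<omega>"
        by eventually_elim (simp add: S_def S_lim_def indicator_def)
      then show "(\<lambda>n. indicator (S n) \<omega> :: real) \<longlonglongrightarrow> indicator S_lim \<omega>"
        by (rule tendsto_eventually)
    qed
  qed (auto simp: indicator_def)
  moreover have "S n \<inter> space M = S n" "S_lim \<inter> space M = S_lim" for n
    by (auto simp: S_def S_lim_def)
  ultimately show ?thesis by (simp add: S_def [symmetric] S_lim_def [symmetric])
qed

lemma emeasure_N1_at_random_time_inter:
  assumes Z: "Z \<in> borel_measurable L_algebra" and Z_nonneg: "\<And>\<omega>. \<omega> \<in> space M \<Longrightarrow> 0 \<le> Z \<omega>"
    and C: "C \<in> sets L_algebra"
  shows "emeasure M ({\<omega>\<in>space M. N1 (Z \<omega>) \<omega> = j} \<inter> C)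
       = (\<integral>\<^sup>+\<omega>. ennreal (indicator C \<omega> * poisson_weight (Z \<omega>) j) \<partial>M)"
proof -
  have [measurable]: "Z \<in> borel_measurable M" by (rule measurable_L_algebra_into_borel[OF Z])
  have [measurable]: "C \<in> sets M" by (rule sets_L_algebra_into_sets[OF C])
  define f where "f n \<omega> = indicator C \<omega> * poisson_weight (dyadic_ceiling n (Z \<omega>)) j" for n \<omega>
  define f_lim where "f_lim \<omega> = indicator C \<omega> * poisson_weight (Z \<omega>) j" for \<omega>
  have [measurable]: "f n \<in> borel_measurable M" for n
    unfolding f_def dyadic_ceiling_def by measurable
  have [measurable]: "f_lim \<in> borel_measurable M" unfolding f_lim_def by measurable
  have f_bounds: "0 \<le> f n \<omega> \<and> f n \<omega> \<le> 1" for n \<omega>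
    unfolding f_def using poisson_weight_nonneg poisson_weight_le_1
    by (auto simp: indicator_def dyadic_ceiling_def)
  have f_lim_bounds: "\<omega> \<in> space M \<Longrightarrow> 0 \<le> f_lim \<omega> \<and> f_lim \<omega> \<le> 1" for \<omega>
    unfolding f_lim_def using poisson_weight_nonneg poisson_weight_le_1 Z_nonneg
    by (auto simp: indicator_def)
  have grid: "measure M ({\<omega>\<in>space M. N1 (dyadic_ceiling n (Z \<omega>)) \<omega> = j} \<inter> C) = integral\<^sup>L M (f n)" for n
  proof (rule measure_eq_integral_if_emeasure_eq)
    have "(\<lambda>\<omega>. nat \<lceil>2^n * Z \<omega>\<rceil>) \<in> measurable L_algebra (count_space UNIV)"
      using Z by measurable
    from emeasure_N1_at_grid_time_inter[OF this _ C, of "\<lambda>k. real k / 2^n"]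
    show "emeasure M ({\<omega>\<in>space M. N1 (dyadic_ceiling n (Z \<omega>)) \<omega> = j} \<inter> C) = (\<integral>\<^sup>+\<omega>. ennreal (f n \<omega>) \<partial>M)"
      by (simp add: f_def dyadic_ceiling_def)
  qed (use f_bounds in auto)
  have "(\<lambda>n. integral\<^sup>L M (f n)) \<longlonglongrightarrow> integral\<^sup>L M f_lim"
  proof (rule integral_dominated_convergence[where w="\<lambda>_. 1"])
    show "AE \<omega> in M. (\<lambda>n. f n \<omega>) \<longlonglongrightarrow> f_lim \<omega>"
      unfolding f_def f_lim_def using Z_nonneg
      by (intro AE_I2 tendsto_mult tendsto_const isCont_tendsto_compose[OF isCont_poisson_weight]
          dyadic_ceiling_tendsto)
  qed (use f_bounds in auto)
  then have "measure M ({\<omega>\<in>space M. N1 (Z \<omega>) \<omega> = j} \<inter> C) = integral\<^sup>L M f_lim"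
    using measure_N1_at_dyadic_time_tendsto[of Z C j] Z_nonneg
    by (intro LIMSEQ_unique) (auto simp: grid)
  moreover have "integrable M f_lim"
    by (rule integrable_const_bound[where B=1]) (use f_lim_bounds in auto)
  then have "ennreal (integral\<^sup>L M f_lim) = (\<integral>\<^sup>+\<omega>. ennreal (f_lim \<omega>) \<partial>M)"
    using f_lim_bounds by (intro nn_integral_eq_integral[symmetric]) auto
  ultimately show ?thesis by (simp add: emeasure_eq_measure f_lim_def)
qed

lemma emeasure_normalized_N1_at_random_time_inter:
  assumes Z[measurable]: "Z \<in> borel_measurable L_algebra" and Z_nonneg: "\<And>\<omega>. \<omega> \<in> space M \<Longrightarrow> 0 \<le> Z \<omega>"
    and A[measurable]: "A \<in> sets borel" and B[measurable]: "B \<in> sets L_algebra"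
  shows "emeasure M ({\<omega>\<in>space M. (real (N1 (Z \<omega>) \<omega>) - Z \<omega>) / sqrt (Z \<omega>) \<in> A} \<inter> B)
       = (\<integral>\<^sup>+\<omega>. indicator B \<omega> * normalized_poisson_prob A (Z \<omega>) \<partial>M)"
proof -
  have [measurable]: "Z \<in> borel_measurable M" by (rule measurable_L_algebra_into_borel[OF Z])
  define E where "E j = {\<omega>\<in>space M. N1 (Z \<omega>) \<omega> = j}" for j
  define C where "C j = B \<inter> {\<omega>\<in>space M. (real j - Z \<omega>) / sqrt (Z \<omega>) \<in> A}" for j :: nat
  have C_L: "C j \<in> sets L_algebra" for j
  proof -
    have "{\<omega>\<in>space L_algebra. (real j - Z \<omega>) / sqrt (Z \<omega>) \<in> A} \<in> sets L_algebra" by measurable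
    then show ?thesis unfolding C_def using B by auto
  qed
  have [measurable]: "C j \<in> sets M" for j by (rule sets_L_algebra_into_sets[OF C_L])
  have E_M: "E j \<in> sets M" for j unfolding E_def using Z_nonneg by (intro sets_N1_at_random_time) auto
  have "{\<omega>\<in>space M. (real (N1 (Z \<omega>) \<omega>) - Z \<omega>) / sqrt (Z \<omega>) \<in> A} \<inter> B = (\<Union>j. E j \<inter> C j)"
    unfolding E_def C_def using sets.sets_into_space[OF sets_L_algebra_into_sets[OF B]] by auto
  also have "emeasure M \<dots> = (\<Sum>j. emeasure M (E j \<inter> C j))"
    using E_M by (intro suminf_emeasure[symmetric]) (auto simp: disjoint_family_on_def E_def)
  also have "\<dots> = (\<Sum>j. \<integral>\<^sup>+\<omega>. ennreal (indicator (C j) \<omega> * poisson_weight (Z \<omega>) j) \<partial>M)"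
    unfolding E_def using Z_nonneg by (intro suminf_cong emeasure_N1_at_random_time_inter[OF Z _ C_L])
  also have "\<dots> = (\<integral>\<^sup>+\<omega>. (\<Sum>j. ennreal (indicator (C j) \<omega> * poisson_weight (Z \<omega>) j)) \<partial>M)"
    by (rule nn_integral_suminf[symmetric]) measurable
  also have "\<dots> = (\<integral>\<^sup>+\<omega>. indicator B \<omega> * normalized_poisson_prob A (Z \<omega>) \<partial>M)"
  proof (rule nn_integral_cong)
    fix \<omega> assume \<omega>: "\<omega> \<in> space M"
    have "ennreal (indicator (C j) \<omega> * poisson_weight (Z \<omega>) j)
        = indicator B \<omega> * ennreal (poisson_weight (Z \<omega>) j * indicator A ((real j - Z \<omega>) / sqrt (Z \<omega>)))" for j
      using \<omega> poisson_weight_nonneg[OF Z_nonneg[OF \<omega>]] by (auto simp: C_def indicator_def)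
    then show "(\<Sum>j. ennreal (indicator (C j) \<omega> * poisson_weight (Z \<omega>) j))
        = indicator B \<omega> * normalized_poisson_prob A (Z \<omega>)"
      unfolding normalized_poisson_prob_def by simp
  qed
  finally show ?thesis .
qed

lemma normalized_N1_at_random_time_tendsto:
  fixes Z :: "real \<Rightarrow> 'a \<Rightarrow> real"
  assumes Z[measurable]: "\<And>T. Z T \<in> borel_measurable L_algebra"
    and Z_nonneg: "\<And>T \<omega>. \<omega> \<in> space M \<Longrightarrow> 0 \<le> Z T \<omega>"
    and Z_tendsto: "AE \<omega> in M. filterlim (\<lambda>T. Z T \<omega>) at_top at_top"
    and A[measurable]: "A \<in> sets borel" and fr: "measure std_normal_measure (frontier A) = 0"
    and B: "B \<in> sets L_algebra"
  shows "((\<lambda>T. measure M ({\<omega>\<in>space M. (real (N1 (Z T \<omega>) \<omega>) - Z T \<omega>) / sqrt (Z T \<omega>) \<in> A} \<inter> B))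
           \<longlongrightarrow> measure std_normal_measure A * measure M B) at_top"
proof -
  have [measurable]: "Z T \<in> borel_measurable M" for T by (rule measurable_L_algebra_into_borel[OF Z])
  have [measurable]: "B \<in> sets M" by (rule sets_L_algebra_into_sets[OF B])
  define F where "F T \<omega> = indicator B \<omega> * enn2real (normalized_poisson_prob A (Z T \<omega>))" for T \<omega>
  have [measurable]: "F T \<in> borel_measurable M" for T unfolding F_def by measurable
  have prob_le_1: "\<omega> \<in> space M \<Longrightarrow> normalized_poisson_prob A (Z T \<omega>) \<le> 1" for T \<omega>
    using Z_nonneg by (rule normalized_poisson_prob_le_1)
  then have F_bounds: "\<omega> \<in> space M \<Longrightarrow> 0 \<le> F T \<omega> \<and> F T \<omega> \<le> 1" for T \<omega>
    unfolding F_def by (auto simp: indicator_def enn2real_leI)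
  have "measure M ({\<omega>\<in>space M. (real (N1 (Z T \<omega>) \<omega>) - Z T \<omega>) / sqrt (Z T \<omega>) \<in> A} \<inter> B) = integral\<^sup>L M (F T)" for T
  proof (rule measure_eq_integral_if_emeasure_eq)
    have "indicator B \<omega> * normalized_poisson_prob A (Z T \<omega>) = ennreal (F T \<omega>)" if "\<omega> \<in> space M" for \<omega>
    proof -
      have "normalized_poisson_prob A (Z T \<omega>) \<noteq> \<top>"
        using prob_le_1[OF that] by (metis ennreal_one_neq_top top_unique)
      then show ?thesis by (simp add: F_def indicator_def ennreal_enn2real_if)
    qed
    then show "emeasure M ({\<omega>\<in>space M. (real (N1 (Z T \<omega>) \<omega>) - Z T \<omega>) / sqrt (Z T \<omega>) \<in> A} \<inter> B)
        = (\<integral>\<^sup>+\<omega>. ennreal (F T \<omega>) \<partial>M)"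
      using Z_nonneg by (simp add: emeasure_normalized_N1_at_random_time_inter[OF Z _ A B] cong: nn_integral_cong)
  qed (use F_bounds in auto)
  moreover have "((\<lambda>T. integral\<^sup>L M (F T)) \<longlongrightarrow> (\<integral>\<omega>. indicator B \<omega> * measure std_normal_measure A \<partial>M)) at_top"
  proof (rule integral_dominated_convergence_at_top[where w="\<lambda>_. 1"])
    show "AE \<omega> in M. ((\<lambda>T. F T \<omega>) \<longlongrightarrow> indicator B \<omega> * measure std_normal_measure A) at_top"
      using Z_tendsto unfolding F_def
      by eventually_elim
        (intro tendsto_mult tendsto_const filterlim_compose[OF normalized_poisson_prob_tendsto[OF A fr]])
    show "\<forall>\<^sub>F T in at_top. AE \<omega> in M. norm (F T \<omega>) \<le> 1"
      using F_bounds by (auto intro!: always_eventually AE_I2)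
  qed auto
  ultimately show ?thesis by (simp add: mult.commute)
qed

end

section \<open>Time change by an inverse subordinator\<close>

lemma interval_integral_0_mono:
  fixes lam :: "real \<Rightarrow> real" and s t :: real
  assumes nonneg: "\<And>t. t \<ge> 0 \<Longrightarrow> lam t \<ge> 0"
    and int: "\<And>t. t \<ge> 0 \<Longrightarrow> set_integrable lborel {0..t} lam"
    and st: "0 \<le> s" "s \<le> t"
  shows "(LBINT \<tau>=0..s. lam \<tau>) \<le> (LBINT \<tau>=0..t. lam \<tau>)"
proof -
  have "(LBINT \<tau>=0..s. lam \<tau>) = (\<integral>x. indicator {0..s} x *\<^sub>R lam x \<partial>lborel)"
    using st by (simp add: interval_integral_Icc zero_ereal_def set_lebesgue_integral_def)
  also have "\<dots> \<le> (\<integral>x. indicator {0..t} x *\<^sub>R lam x \<partial>lborel)"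
    using int[of s] int[of t] st nonneg
    by (intro integral_mono) (auto simp: set_integrable_def indicator_def)
  also have "\<dots> = (LBINT \<tau>=0..t. lam \<tau>)"
    using st by (simp add: interval_integral_Icc zero_ereal_def set_lebesgue_integral_def)
  finally show ?thesis .
qed

lemma interval_integral_0_nonneg:
  fixes lam :: "real \<Rightarrow> real" and s :: real
  assumes "\<And>t. t \<ge> 0 \<Longrightarrow> lam t \<ge> 0" and "\<And>t. t \<ge> 0 \<Longrightarrow> set_integrable lborel {0..t} lam"
    and "0 \<le> s"
  shows "0 \<le> (LBINT \<tau>=0..s. lam \<tau>)"
  using interval_integral_0_mono[OF assms(1,2) order_refl assms(3)]
  by (simp add: interval_integral_Icc zero_ereal_def)

lemma superlevel_nonempty_iff_nat:
  fixes f :: "real \<Rightarrow> real"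
  assumes "mono_on {0..} f"
  shows "(\<exists>u\<ge>0. T < f u) \<longleftrightarrow> (\<exists>n::nat. T < f (real n))"
proof
  assume "\<exists>u\<ge>0. T < f u"
  then obtain u where u: "0 \<le> u" "T < f u" by auto
  have "f u \<le> f (real (nat \<lceil>u\<rceil>))"
    using u real_nat_ceiling_ge by (intro mono_onD[OF assms]) auto
  with u show "\<exists>n::nat. T < f (real n)" by (intro exI[of _ "nat \<lceil>u\<rceil>"]) auto
qed (use of_nat_0_le_iff in blast)

lemma Inf_superlevel_less_iff:
  fixes f :: "real \<Rightarrow> real"
  assumes mono: "mono_on {0..} f"
  shows "Inf {u. 0 \<le> u \<and> T < f u} < c \<longleftrightarrow>
    (\<not> (\<exists>n::nat. T < f (real n)) \<and> Inf ({}::real set) < c) \<or> (\<exists>r\<in>\<rat>. r < c \<and> 0 \<le> r \<and> T < f r)"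
proof (cases "{u. 0 \<le> u \<and> T < f u} = {}")
  case True
  then show ?thesis by (metis (mono_tags) empty_Collect_eq of_nat_0_le_iff)
next
  case False
  then have ex: "\<exists>n::nat. T < f (real n)"
    using superlevel_nonempty_iff_nat[OF mono] by auto
  have "Inf {u. 0 \<le> u \<and> T < f u} < c \<longleftrightarrow> (\<exists>x\<in>{u. 0 \<le> u \<and> T < f u}. x < c)"
    using False by (intro cInf_less_iff) (auto intro: bdd_belowI[of _ 0])
  also have "\<dots> \<longleftrightarrow> (\<exists>r\<in>\<rat>. r < c \<and> 0 \<le> r \<and> T < f r)"
  proof
    assume "\<exists>x\<in>{u. 0 \<le> u \<and> T < f u}. x < c"
    then obtain x where x: "0 \<le> x" "T < f x" "x < c" by auto
    obtain r where r: "r \<in> \<rat>" "x < r" "r < c" using Rats_dense_in_real[OF x(3)] by auto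
    have "f x \<le> f r" using x r by (intro mono_onD[OF mono]) auto
    then show "\<exists>r\<in>\<rat>. r < c \<and> 0 \<le> r \<and> T < f r" using x r by (intro bexI[of _ r]) auto
  qed auto
  finally show ?thesis using ex by auto
qed

lemma Inf_superlevel_tendsto_at_top:
  fixes f :: "real \<Rightarrow> real"
  assumes mono: "mono_on {0..} f" and unbounded: "\<And>T. \<exists>u\<ge>0. T < f u"
  shows "filterlim (\<lambda>T. Inf {u. 0 \<le> u \<and> T < f u}) at_top at_top"
  unfolding filterlim_at_top
proof (intro allI)
  fix z :: real
  show "\<forall>\<^sub>F T in at_top. z \<le> Inf {u. 0 \<le> u \<and> T < f u}"
    using eventually_ge_at_top[of "f (max 0 z)"]
  proof eventually_elim
    case (elim T)
    show ?case
    proof (rule cInf_greatest)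
      show "{u. 0 \<le> u \<and> T < f u} \<noteq> {}" using unbounded[of T] by auto
      fix v assume v: "v \<in> {u. 0 \<le> u \<and> T < f u}"
      show "z \<le> v"
      proof (rule ccontr)
        assume "\<not> z \<le> v"
        then have "f v \<le> f (max 0 z)" using v by (intro mono_onD[OF mono]) auto
        then show False using v elim by auto
      qed
    qed
  qed
qed

locale subordinated_poisson = poisson_with_indep_process +
  fixes \<alpha> :: real and lam :: "real \<Rightarrow> real"
  assumes subordinator: "stable_subordinator M \<alpha> L"
    and lam_pos: "\<And>t. t \<ge> 0 \<Longrightarrow> lam t > 0"
    and lam_integrable: "\<And>t. t \<ge> 0 \<Longrightarrow> set_integrable lborel {0..t} lam"
    and Lam_tendsto: "filterlim (\<lambda>t::real. LBINT \<tau>=0..t. lam \<tau>) at_top at_top"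
begin

definition Lam :: "real \<Rightarrow> real" where
  "Lam t = (LBINT \<tau>=0..t. lam \<tau>)"

abbreviation Y :: "real \<Rightarrow> 'a \<Rightarrow> real" where
  "Y \<equiv> inverse_subordinator L"

lemma mono_Lam_max_0: "mono (\<lambda>x. Lam (max 0 x))"
  unfolding Lam_def using lam_pos lam_integrable by (intro monoI interval_integral_0_mono) (auto simp: less_imp_le)

lemma Lam_nonneg: "0 \<le> s \<Longrightarrow> 0 \<le> Lam s"
  unfolding Lam_def using lam_pos lam_integrable by (intro interval_integral_0_nonneg) (auto simp: less_imp_le)

lemma L_measurable[measurable]: "L t \<in> borel_measurable M"
  using subordinator unfolding stable_subordinator_def by blast

lemma L_zero: "\<omega> \<in> space M \<Longrightarrow> L 0 \<omega> = 0"
  using subordinator unfolding stable_subordinator_def by blast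

lemma L_mono: "\<omega> \<in> space M \<Longrightarrow> mono_on {0..} (\<lambda>t. L t \<omega>)"
  using subordinator unfolding stable_subordinator_def by blast

lemma L_nonneg: "\<omega> \<in> space M \<Longrightarrow> 0 \<le> t \<Longrightarrow> 0 \<le> L t \<omega>"
  using mono_onD[OF L_mono, of \<omega> 0 t] L_zero[of \<omega>] by simp

lemma expectation_exp_neg_L:
  assumes "0 \<le> t"
  shows "expectation (\<lambda>\<omega>. exp (- L t \<omega>)) = exp (- t)"
proof -
  have "\<forall>s t u. 0 \<le> s \<and> s \<le> t \<and> 0 \<le> u \<longrightarrow>
      expectation (\<lambda>\<omega>. exp (- u * (L t \<omega> - L s \<omega>))) = exp (- (t - s) * u powr \<alpha>)"
    using subordinator unfolding stable_subordinator_def by blast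
  from this[rule_format, of 0 t 1] have "expectation (\<lambda>\<omega>. exp (- 1 * (L t \<omega> - L 0 \<omega>))) = exp (- t)"
    using assms by simp
  moreover have "expectation (\<lambda>\<omega>. exp (- 1 * (L t \<omega> - L 0 \<omega>))) = expectation (\<lambda>\<omega>. exp (- L t \<omega>))"
    by (rule Bochner_Integration.integral_cong) (auto simp: L_zero)
  ultimately show ?thesis by simp
qed

text \<open>Markov's inequality for exp(-L(n)) gives P(L(n) \<le> c for all n) \<le> exp(c - n) for every n.\<close>
lemma prob_L_bounded: "measure M {\<omega>\<in>space M. \<forall>n::nat. L (real n) \<omega> \<le> c} = 0"
proof -
  define S where "S = {\<omega>\<in>space M. \<forall>n::nat. L (real n) \<omega> \<le> c}"
  have [measurable]: "S \<in> sets M" unfolding S_def by measurable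
  have bound: "exp (- c) * measure M S \<le> exp (- real n)" for n :: nat
  proof -
    have "exp (- c) * measure M S = (\<integral>\<omega>. indicator S \<omega> * exp (- c) \<partial>M)"
      by simp
    also have "\<dots> \<le> (\<integral>\<omega>. exp (- L (real n) \<omega>) \<partial>M)"
    proof (rule integral_mono)
      show "integrable M (\<lambda>\<omega>. indicator S \<omega> * exp (- c))"
        by (rule integrable_const_bound[where B="exp (- c)"]) (auto simp: indicator_def)
      show "integrable M (\<lambda>\<omega>. exp (- L (real n) \<omega>))"
        by (rule integrable_const_bound[where B=1]) (auto simp: L_nonneg)
    qed (auto simp: S_def indicator_def)
    also have "\<dots> = exp (- real n)" by (simp add: expectation_exp_neg_L)
    finally show ?thesis .
  qed
  have "(\<lambda>n. exp (- real n)) \<longlonglongrightarrow> (0::real)"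
    by (rule filterlim_compose[OF exp_at_bot filterlim_compose[OF filterlim_uminus_at_bot_at_top
          filterlim_real_sequentially]])
  then have "exp (- c) * measure M S \<le> 0"
    using bound by (intro tendsto_lowerbound[of "\<lambda>n. exp (- real n)"]) (auto intro: always_eventually)
  then show ?thesis unfolding S_def by (simp add: measure_le_0_iff mult_le_0_iff)
qed

lemma AE_L_unbounded: "AE \<omega> in M. \<forall>T. \<exists>u\<ge>0. T < L u \<omega>"
proof (rule AE_I')
  show "(\<Union>k::nat. {\<omega>\<in>space M. \<forall>n::nat. L (real n) \<omega> \<le> real k}) \<in> null_sets M"
    using prob_L_bounded by (intro null_sets_UN) (simp add: null_sets_def emeasure_eq_measure)
  show "{\<omega>\<in>space M. \<not> (\<forall>T. \<exists>u\<ge>0. T < L u \<omega>)} \<subseteq> (\<Union>k::nat. {\<omega>\<in>space M. \<forall>n::nat. L (real n) \<omega> \<le> real k})"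
  proof (intro subsetI)
    fix \<omega> assume "\<omega> \<in> {\<omega>\<in>space M. \<not> (\<forall>T. \<exists>u\<ge>0. T < L u \<omega>)}"
    then obtain T where \<omega>: "\<omega> \<in> space M" and bounded: "\<not> (\<exists>u\<ge>0. T < L u \<omega>)" by auto
    obtain k :: nat where "T \<le> real k" using real_arch_simple by blast
    with bounded have "\<forall>n::nat. L (real n) \<omega> \<le> real k"
      by (meson of_nat_0_le_iff not_less order_trans)
    with \<omega> show "\<omega> \<in> (\<Union>k::nat. {\<omega>\<in>space M. \<forall>n::nat. L (real n) \<omega> \<le> real k})"
      by blast
  qed
qed

lemma inverse_subordinator_measurable[measurable]: "Y T \<in> borel_measurable L_algebra"
proof (rule borel_measurable_iff_less[THEN iffD2], intro allI)
  fix c :: real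
  define U where "U r = {\<omega>\<in>space M. T < L r \<omega>}" for r
  have U: "U r \<in> sets L_algebra" for r
  proof -
    have "{\<omega>\<in>space L_algebra. T < L r \<omega>} \<in> sets L_algebra" by measurable
    then show ?thesis by (simp add: U_def)
  qed
  \<comment> \<open>by monotonicity of the paths, it suffices to look at natural and rational times\<close>
  have "{\<omega>\<in>space L_algebra. Y T \<omega> < c}
      = (if Inf ({}::real set) < c then space L_algebra - (\<Union>n::nat. U (real n)) else {})
        \<union> (\<Union>r\<in>\<rat> \<inter> {0..<c}. U r)"
    unfolding U_def inverse_subordinator_def using Inf_superlevel_less_iff[OF L_mono] by (auto; force)
  also have "\<dots> \<in> sets L_algebra"
    using countable_rat U sets.compl_sets[of "\<Union>n::nat. U (real n)" L_algebra]
    by (intro sets.Un sets.countable_UN') auto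
  finally show "{\<omega>\<in>space L_algebra. Y T \<omega> < c} \<in> sets L_algebra" .
qed

lemma gen_sigma_subset_sets_L_algebra: "gen_sigma M Y \<subseteq> sets L_algebra"
proof -
  have "(\<Union>s\<in>{0..}. {Y s -` A \<inter> space M | A. A \<in> sets borel}) \<subseteq> sets L_algebra"
    using measurable_sets[OF inverse_subordinator_measurable] by auto
  then show ?thesis
    unfolding gen_sigma_def using sets.sigma_sets_subset[of _ L_algebra] by simp
qed

lemma inverse_subordinator_nonneg: "\<exists>u\<ge>0. T < L u \<omega> \<Longrightarrow> 0 \<le> Y T \<omega>"
  unfolding inverse_subordinator_def by (rule cInf_greatest) auto

lemma inverse_subordinator_tendsto:
  "\<omega> \<in> space M \<Longrightarrow> \<forall>T. \<exists>u\<ge>0. T < L u \<omega> \<Longrightarrow> filterlim (\<lambda>T. Y T \<omega>) at_top at_top"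
  unfolding inverse_subordinator_def by (intro Inf_superlevel_tendsto_at_top L_mono) auto

lemma normalized_N1_at_Lam_inverse_subordinator_measurable:
  "(\<lambda>\<omega>. (real (N1 (Lam (Y T \<omega>)) \<omega>) - Lam (Y T \<omega>)) / sqrt (Lam (Y T \<omega>))) \<in> borel_measurable M"
proof -
  define G where "G = {\<omega>\<in>space M. \<exists>n::nat. T < L (real n) \<omega>}"
  define Z where "Z \<omega> = Lam (max 0 (Y T \<omega>))" for \<omega>
  define X where "X s \<omega> = (real (N1 s \<omega>) - s) / sqrt s" for s \<omega>
  have "G = (\<Union>n. {\<omega>\<in>space M. T < L (real n) \<omega>})" unfolding G_def by auto
  then have G[measurable]: "G \<in> sets M" by simp
  have Z_M[measurable]: "Z \<in> borel_measurable M"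
    using measurable_compose[OF inverse_subordinator_measurable borel_measurable_mono[OF mono_Lam_max_0]]
    unfolding Z_def by (intro measurable_L_algebra_into_borel) (simp add: o_def)
  have [measurable]: "(\<lambda>\<omega>. real (N1 (Z \<omega>) \<omega>)) \<in> borel_measurable M"
    by (rule N1_at_random_time_measurable[OF Z_M]) (simp add: Z_def Lam_nonneg)
  \<comment> \<open>off G the superlevel set is empty, so Y T is the junk value Inf {}\<close>
  have "X (Lam (Y T \<omega>)) \<omega> = (if \<omega> \<in> G then X (Z \<omega>) \<omega> else X (Lam (Inf {})) \<omega>)" if "\<omega> \<in> space M" for \<omega>
  proof (cases "\<omega> \<in> G")
    case True
    then have "0 \<le> Y T \<omega>"
      by (intro inverse_subordinator_nonneg) (auto simp: G_def intro: of_nat_0_le_iff)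
    then show ?thesis using True by (simp add: Z_def max_def)
  next
    case False
    then have "{u. 0 \<le> u \<and> T < L u \<omega>} = {}"
      using superlevel_nonempty_iff_nat[OF L_mono[OF that], of T] that by (auto simp: G_def)
    then have "Y T \<omega> = Inf {}" unfolding inverse_subordinator_def by (simp only:)
    then show ?thesis using False by simp
  qed
  moreover have "(\<lambda>\<omega>. if \<omega> \<in> G then X (Z \<omega>) \<omega> else X (Lam (Inf {})) \<omega>) \<in> borel_measurable M"
    unfolding X_def by measurable
  ultimately show ?thesis
    unfolding X_def by (subst measurable_cong) auto
qed

lemma AE_Lam_inverse_subordinator:
  "AE \<omega> in M. (\<forall>T. Lam (Y T \<omega>) = Lam (max 0 (Y T \<omega>))) \<and>
     filterlim (\<lambda>T. Lam (max 0 (Y T \<omega>))) at_top at_top"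
  using AE_space AE_L_unbounded
proof eventually_elim
  case (elim \<omega>)
  then have "Lam (Y T \<omega>) = Lam (max 0 (Y T \<omega>))" for T
    using inverse_subordinator_nonneg by (simp add: max_def)
  moreover have "filterlim (\<lambda>T. Lam (Y T \<omega>)) at_top at_top"
    using elim unfolding Lam_def by (intro filterlim_compose[OF Lam_tendsto] inverse_subordinator_tendsto)
  ultimately show ?case by simp
qed

lemma normalized_N1_at_Lam_inverse_subordinator_tendsto:
  assumes A[measurable]: "A \<in> sets borel" and fr: "measure std_normal_measure (frontier A) = 0"
    and B: "B \<in> gen_sigma M Y"
  shows "((\<lambda>T. measure M ({\<omega>\<in>space M. (real (N1 (Lam (Y T \<omega>)) \<omega>) - Lam (Y T \<omega>)) / sqrt (Lam (Y T \<omega>)) \<in> A} \<inter> B))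
           \<longlongrightarrow> measure std_normal_measure A * measure M B) at_top"
proof -
  define Z where "Z T \<omega> = Lam (max 0 (Y T \<omega>))" for T \<omega>
  have B_L: "B \<in> sets L_algebra" using B gen_sigma_subset_sets_L_algebra by auto
  have [measurable]: "B \<in> sets M" by (rule sets_L_algebra_into_sets[OF B_L])
  have Z_L[measurable]: "Z T \<in> borel_measurable L_algebra" for T
    using measurable_compose[OF inverse_subordinator_measurable borel_measurable_mono[OF mono_Lam_max_0]]
    unfolding Z_def by (simp add: o_def)
  have Z_nonneg: "0 \<le> Z T \<omega>" for T \<omega> unfolding Z_def by (simp add: Lam_nonneg)
  have [measurable]: "(\<lambda>\<omega>. real (N1 (Z T \<omega>) \<omega>)) \<in> borel_measurable M" for T
    using measurable_L_algebra_into_borel[OF Z_L] Z_nonneg by (rule N1_at_random_time_measurable)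
  have [measurable]: "Z T \<in> borel_measurable M" for T by (rule measurable_L_algebra_into_borel[OF Z_L])
  have [measurable]: "(\<lambda>\<omega>. (real (N1 (Lam (Y T \<omega>)) \<omega>) - Lam (Y T \<omega>)) / sqrt (Lam (Y T \<omega>))) \<in> borel_measurable M" for T
    by (rule normalized_N1_at_Lam_inverse_subordinator_measurable)
  have "measure M ({\<omega>\<in>space M. (real (N1 (Lam (Y T \<omega>)) \<omega>) - Lam (Y T \<omega>)) / sqrt (Lam (Y T \<omega>)) \<in> A} \<inter> B)
      = measure M ({\<omega>\<in>space M. (real (N1 (Z T \<omega>) \<omega>) - Z T \<omega>) / sqrt (Z T \<omega>) \<in> A} \<inter> B)" for T
  proof (rule measure_eq_AE)
    show "AE \<omega> in M. \<omega> \<in> {\<omega>\<in>space M. (real (N1 (Lam (Y T \<omega>)) \<omega>) - Lam (Y T \<omega>)) / sqrt (Lam (Y T \<omega>)) \<in> A} \<inter> B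
        \<longleftrightarrow> \<omega> \<in> {\<omega>\<in>space M. (real (N1 (Z T \<omega>) \<omega>) - Z T \<omega>) / sqrt (Z T \<omega>) \<in> A} \<inter> B"
      using AE_Lam_inverse_subordinator by eventually_elim (simp add: Z_def)
  qed measurable
  moreover have "((\<lambda>T. measure M ({\<omega>\<in>space M. (real (N1 (Z T \<omega>) \<omega>) - Z T \<omega>) / sqrt (Z T \<omega>) \<in> A} \<inter> B))
           \<longlongrightarrow> measure std_normal_measure A * measure M B) at_top"
    using AE_Lam_inverse_subordinator Z_nonneg
    by (intro normalized_N1_at_random_time_tendsto[OF Z_L _ _ A fr B_L]) (auto simp: Z_def)
  ultimately show ?thesis by simp
qed

end

theorem mainTheorem2:
  fixes M :: "'a measure" and N1 :: "real \<Rightarrow> 'a \<Rightarrow> nat" and L :: "real \<Rightarrow> 'a \<Rightarrow> real"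
    and lam :: "real \<Rightarrow> real" and \<alpha> :: real
  assumes "prob_space M"
    and "std_poisson_process M N1"
    and "\<And>t. t \<ge> 0 \<Longrightarrow> lam t > 0"
    and "\<And>t. t \<ge> 0 \<Longrightarrow> set_integrable lborel {0..t} lam"
    and "filterlim (\<lambda>t::real. LBINT \<tau>=0..t. lam \<tau>) at_top at_top"
    and "0 < \<alpha>" and "\<alpha> < 1"
    and "stable_subordinator M \<alpha> L"
    and "prob_space.indep_var M
           (PiM UNIV (\<lambda>_::real. (borel::real measure))) (\<lambda>\<omega> t. real (N1 t \<omega>))
           (PiM UNIV (\<lambda>_::real. (borel::real measure))) (\<lambda>\<omega> t. L t \<omega>)"
  shows "\<forall>B \<in> gen_sigma M (inverse_subordinator L).
           \<forall>A \<in> sets borel. measure std_normal_measure (frontier A) = 0 \<longrightarrow>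
             ((\<lambda>T. measure M ({\<omega> \<in> space M.
                  (let \<Lambda> = (\<lambda>t::real. LBINT \<tau>=0..t. lam \<tau>); y = inverse_subordinator L T \<omega> in
                    (real (N1 (\<Lambda> y) \<omega>) - \<Lambda> y) / sqrt (\<Lambda> y)) \<in> A} \<inter> B))
              \<longlongrightarrow> measure std_normal_measure A * measure M B) at_top"
proof -
  interpret subordinated_poisson M N1 L \<alpha> lam
    by (intro subordinated_poisson.intro poisson_with_indep_process.intro
          poisson_with_indep_process_axioms.intro subordinated_poisson_axioms.intro) (fact assms)+
  show ?thesis
    using normalized_N1_at_Lam_inverse_subordinator_tendsto unfolding Lam_def Let_def by blast
qed

end
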